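(* Let $q$ be odd, let $\mathcal{K}$ be an arc in $\mathbb{P}^2(\mathbb{F}_q)$ and $\mathcal{C}_1$ an irreducible envelope of $\mathcal{K}$ of degree $d$. Let $Q\in\mathcal{K}$ and let $\mathcal{A}_Q$ be the set of points of $\mathcal{C}_1$ corresponding to unisecants of $\mathcal{K}$ passing through $Q$. Let $u=\#\mathcal{A}_Q$ and let $v$ be the number of points of $\mathcal{A}_Q$ which are non-singular inflexion points of $\mathcal{C}_1$. Then $2(u-v)+v\ge d$.
   Context: A $k$-arc is a set of $k$ points of $\mathbb{P}^2(\mathbb{F}_q)$ no three collinear. Unisecants (resp. 2-secants) of $\mathcal{K}$: lines of $\mathbb{P}^2(\mathbb{F}_q)$ meeting $\mathcal{K}$ in one (resp. two) points. Lines are points of the dual plane; $\ell_P$ is the dual line of lines through $P$; $t=q-k+2$. (Segre) For $q$ odd an envelope $\mathcal{C}$ of $\mathcal{K}$ is a plane curve of the dual plane, defined over $\mathbb{F}_q$, of degree $2t$, containing all $kt$ unisecants, with $I(\ell,\mathcal{C}\cap\ell_P)=2$ for each unisecant $\ell$ through $P\in\mathcal{K}$, containing no 2-secant, with components of multiplicity at most $2$ and at least one of multiplicity $1$. A non-singular point $P$ of a plane curve $\mathcal{A}$ is an inflexion point if $I(P,\mathcal{A}\cap\ell)>2$ for the tangent $\ell$ at $P$. A special point of $\mathcal{C}$ is a non-singular, $\mathbb{F}_q$-rational, non-inflexion point; the unique irreducible component of $\mathcal{C}$ through a special point is the irreducible envelope associated to it; an irreducible envelope of $\mathcal{K}$ is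 one associated to some special point. *)

theory Defs
  imports "HOL-Computational_Algebra.Computational_Algebra" "HOL-Library.Extended_Nat"
begin

text \<open>Homogeneous coordinates: triples. Trivariate polynomials over k are nested
  univariate polynomials: outer variable X, middle Y, inner Z.\<close>

type_synonym 'k pt = "'k \<times> 'k \<times> 'k"
type_synonym 'k poly3 = "'k poly poly poly"

definition pclass :: "'k::field pt \<Rightarrow> 'k pt set" where
  "pclass v = {(c * fst v, c * fst (snd v), c * snd (snd v)) | c. c \<noteq> 0}"

text \<open>Points of the projective plane P^2(k) (and, identically, of the dual plane).\<close>
definition P2 :: "'k::field pt set set" where
  "P2 = {pclass v | v. v \<noteq> (0,0,0)}"

definition rep :: "'k::field pt set \<Rightarrow> 'k pt" where
  "rep P = (SOME v. v \<in> P)"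

definition rational :: "'k::field set \<Rightarrow> 'k pt set \<Rightarrow> bool" where
  "rational Fq P \<longleftrightarrow> P \<in> P2 \<and> (\<exists>a b c. (a,b,c) \<in> P \<and> a \<in> Fq \<and> b \<in> Fq \<and> c \<in> Fq)"

definition dot :: "'k::field pt \<Rightarrow> 'k pt \<Rightarrow> 'k" where
  "dot v w = fst v * fst w + fst (snd v) * fst (snd w) + snd (snd v) * snd (snd w)"

definition inc :: "'k::field pt set \<Rightarrow> 'k pt set \<Rightarrow> bool" where
  "inc P L \<longleftrightarrow> dot (rep P) (rep L) = 0"

definition det3 :: "'k::field pt \<Rightarrow> 'k pt \<Rightarrow> 'k pt \<Rightarrow> 'k" where
  "det3 u v w = (case u of (a1,a2,a3) \<Rightarrow> case v of (b1,b2,b3) \<Rightarrow> case w of (c1,c2,c3) \<Rightarrow>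
     a1*(b2*c3 - b3*c2) - a2*(b1*c3 - b3*c1) + a3*(b1*c2 - b2*c1))"

definition collinear3 :: "'k::field pt set \<Rightarrow> 'k pt set \<Rightarrow> 'k pt set \<Rightarrow> bool" where
  "collinear3 P Q R \<longleftrightarrow> det3 (rep P) (rep Q) (rep R) = 0"

definition arc :: "'k::field set \<Rightarrow> 'k pt set set \<Rightarrow> bool" where
  "arc Fq K \<longleftrightarrow> finite K \<and> (\<forall>P\<in>K. rational Fq P) \<and>
     (\<forall>P\<in>K. \<forall>Q\<in>K. \<forall>R\<in>K. P \<noteq> Q \<and> P \<noteq> R \<and> Q \<noteq> R \<longrightarrow> \<not> collinear3 P Q R)"

definition unisecant :: "'k::field set \<Rightarrow> 'k pt set set \<Rightarrow> 'k pt set \<Rightarrow> bool" where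
  "unisecant Fq K L \<longleftrightarrow> rational Fq L \<and> card {P\<in>K. inc P L} = 1"

definition two_secant :: "'k::field set \<Rightarrow> 'k pt set set \<Rightarrow> 'k pt set \<Rightarrow> bool" where
  "two_secant Fq K L \<longleftrightarrow> rational Fq L \<and> card {P\<in>K. inc P L} = 2"

definition eval3 :: "'a::comm_semiring_1 poly3 \<Rightarrow> 'a \<Rightarrow> 'a \<Rightarrow> 'a \<Rightarrow> 'a" where
  "eval3 F x y z = poly (map_poly (\<lambda>G. poly (map_poly (\<lambda>h. poly h z) G) y) F) x"

definition evalp :: "'k::field poly3 \<Rightarrow> 'k pt \<Rightarrow> 'k" where
  "evalp F v = eval3 F (fst v) (fst (snd v)) (snd (snd v))"

definition coeff3 :: "'a::zero poly3 \<Rightarrow> nat \<Rightarrow> nat \<Rightarrow> nat \<Rightarrow> 'a" where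
  "coeff3 F i j l = coeff (coeff (coeff F i) j) l"

definition homogeneous :: "'a::zero poly3 \<Rightarrow> nat \<Rightarrow> bool" where
  "homogeneous F n \<longleftrightarrow> F \<noteq> 0 \<and> (\<forall>i j l. coeff3 F i j l \<noteq> 0 \<longrightarrow> i + j + l = n)"

definition curve_deg :: "'a::zero poly3 \<Rightarrow> nat" where
  "curve_deg F = (THE n. homogeneous F n)"

definition on_curve :: "'k::field poly3 \<Rightarrow> 'k pt set \<Rightarrow> bool" where
  "on_curve F P \<longleftrightarrow> P \<in> P2 \<and> evalp F (rep P) = 0"

definition dX :: "'k::field poly3 \<Rightarrow> 'k poly3" where "dX F = pderiv F"
definition dY :: "'k::field poly3 \<Rightarrow> 'k poly3" where "dY F = map_poly pderiv F"
definition dZ :: "'k::field poly3 \<Rightarrow> 'k poly3" where "dZ F = map_poly (map_poly pderiv) F"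

definition gradient :: "'k::field poly3 \<Rightarrow> 'k pt \<Rightarrow> 'k pt" where
  "gradient F v = (evalp (dX F) v, evalp (dY F) v, evalp (dZ F) v)"

definition nonsingular :: "'k::field poly3 \<Rightarrow> 'k pt set \<Rightarrow> bool" where
  "nonsingular F P \<longleftrightarrow> on_curve F P \<and> gradient F (rep P) \<noteq> (0,0,0)"

definition tangent :: "'k::field poly3 \<Rightarrow> 'k pt set \<Rightarrow> 'k pt set" where
  "tangent F P = pclass (gradient F (rep P))"

text \<open>Restriction of F to the parametrised line t \<mapsto> v + t w.\<close>
definition restr :: "'k::field poly3 \<Rightarrow> 'k pt \<Rightarrow> 'k pt \<Rightarrow> 'k poly" where
  "restr F v w = eval3 (map_poly (map_poly (map_poly (\<lambda>c. [:c:]))) F)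
      [:fst v, fst w:] [:fst (snd v), fst (snd w):] [:snd (snd v), snd (snd w):]"

text \<open>Intersection multiplicity I(P, A \<inter> L) of the curve F with a line L through P:
  order at t = 0 of F restricted to a parametrisation P + tR of L (R another point of L);
  infinite if L is contained in the curve.\<close>
definition imult :: "'k::field poly3 \<Rightarrow> 'k pt set \<Rightarrow> 'k pt set \<Rightarrow> enat" where
  "imult F P L = (let R = (SOME R. R \<in> P2 \<and> R \<noteq> P \<and> inc R L);
                     r = restr F (rep P) (rep R)
                  in if r = 0 then \<infinity> else enat (order 0 r))"

definition inflexion :: "'k::field poly3 \<Rightarrow> 'k pt set \<Rightarrow> bool" where
  "inflexion F P \<longleftrightarrow> nonsingular F P \<and> imult F P (tangent F P) > 2"

definition coeffs_in :: "'k::field set \<Rightarrow> 'k poly3 \<Rightarrow> bool" where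
  "coeffs_in Fq F \<longleftrightarrow> (\<forall>i j l. coeff3 F i j l \<in> Fq)"

text \<open>A line through P
  is a point of the dual plane; the pencil \<ell>_P of lines through P is the dual line with
  the same coordinates as P, hence is represented by P itself.\<close>
definition envelope :: "'k::field_gcd set \<Rightarrow> 'k pt set set \<Rightarrow> 'k poly3 \<Rightarrow> bool" where
  "envelope Fq K C \<longleftrightarrow>
     coeffs_in Fq C \<and>
     int (curve_deg C) = 2 * (int (card Fq) - int (card K) + 2) \<and>
     homogeneous C (curve_deg C) \<and>
     (\<forall>L. unisecant Fq K L \<longrightarrow> on_curve C L) \<and>
     (\<forall>P\<in>K. \<forall>L. unisecant Fq K L \<and> inc P L \<longrightarrow> imult C L P = 2) \<and>
     (\<forall>L. two_secant Fq K L \<longrightarrow> \<not> on_curve C L) \<and>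
     (\<forall>G. irreducible G \<and> G dvd C \<longrightarrow> multiplicity G C \<le> 2) \<and>
     (\<exists>G. irreducible G \<and> G dvd C \<and> multiplicity G C = 1)"

definition special_point :: "'k::field set \<Rightarrow> 'k poly3 \<Rightarrow> 'k pt set \<Rightarrow> bool" where
  "special_point Fq C P \<longleftrightarrow> nonsingular C P \<and> rational Fq P \<and> \<not> inflexion C P"

text \<open>C1 is an irreducible envelope of K: the unique irreducible component (factor)
  of some envelope C through a special point of C.\<close>
definition irreducible_envelope :: "'k::field_gcd set \<Rightarrow> 'k pt set set \<Rightarrow> 'k poly3 \<Rightarrow> bool" where
  "irreducible_envelope Fq K C1 \<longleftrightarrow>
     (\<exists>C P. envelope Fq K C \<and> special_point Fq C P \<and>
        irreducible C1 \<and> C1 dvd C \<and> on_curve C1 P \<and>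
        (\<forall>G. irreducible G \<and> G dvd C \<and> on_curve G P \<longrightarrow> G dvd C1 \<and> C1 dvd G))"

definition alg_closed :: "'k::field itself \<Rightarrow> bool" where
  "alg_closed _ \<longleftrightarrow> (\<forall>p::'k poly. degree p > 0 \<longrightarrow> (\<exists>x. poly p x = 0))"

definition subfield :: "'k::field set \<Rightarrow> bool" where
  "subfield S \<longleftrightarrow> 0 \<in> S \<and> 1 \<in> S \<and> (\<forall>a\<in>S. \<forall>b\<in>S. a + b \<in> S \<and> a * b \<in> S \<and> - a \<in> S) \<and>
     (\<forall>a\<in>S. a \<noteq> 0 \<longrightarrow> inverse a \<in> S)"

end

theory Submission
  imports Defs
begin

text \<open>The lines through \<open>Q\<close> form a line \<open>\<ell>\<^sub>Q\<close> of the dual plane. Each of the \<open>q + 1\<close> rational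
  lines through \<open>Q\<close> is a unisecant or meets \<open>K\<close> in a second point, and distinct lines have distinct
  second points, so at least \<open>t = q - k + 2\<close> unisecants pass through \<open>Q\<close>. The envelope \<open>C\<close> has
  degree \<open>2t\<close> and meets \<open>\<ell>\<^sub>Q\<close> with multiplicity 2 at each of them; since the multiplicities
  of \<open>C\<close> along \<open>\<ell>\<^sub>Q\<close> add up to its degree, \<open>C\<close> meets \<open>\<ell>\<^sub>Q\<close> nowhere else.
  The component \<open>C\<^sub>1\<close> of \<open>C\<close> therefore meets \<open>\<ell>\<^sub>Q\<close> only at the points of \<open>A\<^sub>Q\<close>, each
  time with multiplicity at most 2, and these multiplicities add up to \<open>d\<close>. At an inflexion
  point \<open>L\<close> of \<open>C\<^sub>1\<close> the multiplicity is at most 1: multiplicity 2 would make \<open>\<ell>\<^sub>Q\<close> the tangent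
  of \<open>C\<^sub>1\<close> at \<open>L\<close>, which meets \<open>C\<^sub>1\<close> at \<open>L\<close> with multiplicity greater than 2.\<close>

section \<open>Trivariate polynomials\<close>

definition rng_hom :: "('a::comm_semiring_1 \<Rightarrow> 'b::comm_semiring_1) \<Rightarrow> bool" where
  "rng_hom f \<longleftrightarrow> f 0 = 0 \<and> (\<forall>a b. f (a + b) = f a + f b) \<and> (\<forall>a b. f (a * b) = f a * f b)"

lemma rng_homD:
  assumes "rng_hom f" shows "f 0 = 0" "f (a + b) = f a + f b" "f (a * b) = f a * f b"
  using assms by (auto simp: rng_hom_def)

lemma map_poly_add_rng_hom:
  "rng_hom f \<Longrightarrow> map_poly f (p + q) = map_poly f p + map_poly f q"
  by (intro poly_eqI) (simp add: coeff_map_poly rng_homD)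

lemma map_poly_mult_rng_hom:
  assumes "rng_hom f" shows "map_poly f (p * q) = map_poly f p * map_poly f q"
proof (induction p)
  case (pCons a p)
  have "map_poly f (pCons a p * q) = map_poly f (smult a q) + map_poly f (pCons 0 (p * q))"
    by (simp add: map_poly_add_rng_hom[OF assms])
  also have "map_poly f (pCons 0 (p * q)) = pCons 0 (map_poly f p * map_poly f q)"
    using pCons.IH by (simp add: map_poly_pCons rng_homD[OF assms])
  finally show ?case
    by (simp add: map_poly_pCons map_poly_smult rng_homD[OF assms])
qed simp

lemma rng_hom_map_poly: "rng_hom f \<Longrightarrow> rng_hom (map_poly f)"
  by (simp add: rng_hom_def map_poly_add_rng_hom map_poly_mult_rng_hom)

lemma rng_hom_poly: "rng_hom (\<lambda>p. poly p x)"
  by (simp add: rng_hom_def)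

lemma rng_hom_const_poly: "rng_hom (\<lambda>c. [:c:])"
  by (simp add: rng_hom_def mult.commute)

lemma rng_hom_comp: "rng_hom f \<Longrightarrow> rng_hom g \<Longrightarrow> rng_hom (\<lambda>x. f (g x))"
  by (simp add: rng_hom_def)

definition map_poly3 :: "('a::zero \<Rightarrow> 'b::zero) \<Rightarrow> 'a poly3 \<Rightarrow> 'b poly3" where
  "map_poly3 h = map_poly (map_poly (map_poly h))"

lemma rng_hom_map_poly3: "rng_hom h \<Longrightarrow> rng_hom (map_poly3 h)"
  unfolding map_poly3_def by (intro rng_hom_map_poly)

lemma coeff3_map_poly3: "h 0 = 0 \<Longrightarrow> coeff3 (map_poly3 h F) i j l = h (coeff3 F i j l)"
  by (simp add: map_poly3_def coeff3_def coeff_map_poly)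

lemma eval3_mult: "eval3 (F * G) x y z = eval3 F x y z * eval3 G x y z"
  unfolding eval3_def
  by (simp add: map_poly_mult_rng_hom rng_hom_comp[OF rng_hom_poly rng_hom_map_poly[OF rng_hom_poly]])

lemma poly3_eqI: "(\<And>i j l. coeff3 F i j l = coeff3 G i j l) \<Longrightarrow> F = G"
  unfolding coeff3_def by (intro poly_eqI) blast

lemma coeff3_0 [simp]: "coeff3 0 i j l = 0"
  by (simp add: coeff3_def)

lemma curve_deg_eqI:
  assumes "homogeneous F n" shows "curve_deg F = n"
proof -
  have "F \<noteq> 0" using assms by (simp add: homogeneous_def)
  then obtain i j l where nz: "coeff3 F i j l \<noteq> 0"
    using poly3_eqI[of F 0] by (auto simp: coeff3_def)
  have "m = n" if "homogeneous F m" for m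
    using assms that nz unfolding homogeneous_def by metis
  then show ?thesis unfolding curve_deg_def using assms by (rule the_equality[rotated])
qed

definition coeff3_bound :: "'a::zero poly3 \<Rightarrow> nat \<Rightarrow> bool" where
  "coeff3_bound F B \<longleftrightarrow> (\<forall>i j l. coeff3 F i j l \<noteq> 0 \<longrightarrow> i < B \<and> j < B \<and> l < B)"

lemma coeff3_bound_map_poly3: "coeff3_bound F B \<Longrightarrow> h 0 = 0 \<Longrightarrow> coeff3_bound (map_poly3 h F) B"
  unfolding coeff3_bound_def by (metis coeff3_map_poly3)

lemma coeff3_bound_ex: "\<exists>B. coeff3_bound F B"
proof -
  define D1 where "D1 = degree F"
  define D2 where "D2 = (\<Sum>i\<le>D1. degree (coeff F i))"
  define D3 where "D3 = (\<Sum>i\<le>D1. \<Sum>j\<le>degree (coeff F i). degree (coeff (coeff F i) j))"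
  have "coeff3_bound F (Suc (D1 + D2 + D3))"
    unfolding coeff3_bound_def
  proof (intro allI impI)
    fix i j l assume nz: "coeff3 F i j l \<noteq> 0"
    then have "coeff F i \<noteq> 0" "coeff (coeff F i) j \<noteq> 0" by (auto simp: coeff3_def)
    then have i: "i \<le> D1" and j: "j \<le> degree (coeff F i)"
      and l: "l \<le> degree (coeff (coeff F i) j)"
      using nz le_degree unfolding D1_def coeff3_def by blast+
    have "degree (coeff F i) \<le> D2" unfolding D2_def
      by (rule member_le_sum) (use i in auto)
    moreover have "degree (coeff (coeff F i) j) \<le> D3"
      unfolding D3_def using i j
      by (intro order.trans[OF member_le_sum member_le_sum[where f = "\<lambda>i. \<Sum>j\<le>degree (coeff F i). _ i j"]]) auto
    ultimately show "i < Suc (D1 + D2 + D3) \<and> j < Suc (D1 + D2 + D3) \<and> l < Suc (D1 + D2 + D3)"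
      using i j l by linarith
  qed
  then show ?thesis by blast
qed

lemma poly_eq_sum_lessThan:
  fixes p :: "'a::comm_semiring_1 poly"
  assumes "\<And>i. B \<le> i \<Longrightarrow> coeff p i = 0"
  shows "poly p x = (\<Sum>i<B. coeff p i * x ^ i)"
proof (cases "p = 0")
  case False
  then have "degree p < B" using assms by (meson leading_coeff_0_iff not_le)
  then have "(\<Sum>i<B. coeff p i * x ^ i) = (\<Sum>i\<le>degree p. coeff p i * x ^ i)"
    by (intro sum.mono_neutral_right) (auto simp: coeff_eq_0)
  then show ?thesis by (simp add: poly_altdef)
qed simp

lemma eval3_eq_sum:
  assumes "coeff3_bound F B"
  shows "eval3 F x y z = (\<Sum>i<B. \<Sum>j<B. \<Sum>l<B. coeff3 F i j l * x ^ i * y ^ j * z ^ l)"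
proof -
  have "coeff F i = 0" if "B \<le> i" for i
    using assms that leading_coeff_neq_0 unfolding coeff3_bound_def coeff3_def by (metis leD)
  moreover have "coeff (coeff F i) j = 0" if "B \<le> j" for i j
    using assms that leading_coeff_neq_0 unfolding coeff3_bound_def coeff3_def by (metis leD)
  moreover have "coeff (coeff (coeff F i) j) l = 0" if "B \<le> l" for i j l
    using assms that unfolding coeff3_bound_def coeff3_def by (metis leD)
  ultimately have "eval3 F x y z =
      (\<Sum>i<B. (\<Sum>j<B. (\<Sum>l<B. coeff3 F i j l * z ^ l) * y ^ j) * x ^ i)"
    unfolding eval3_def coeff3_def by (simp add: poly_eq_sum_lessThan[where B = B] coeff_map_poly)
  then show ?thesis
    by (simp add: sum_distrib_right sum_distrib_left mult_ac)
qed

section \<open>Homogeneous factors\<close>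

definition const4 :: "'k::field \<Rightarrow> 'k poly3 poly" where
  "const4 c = [:[:[:[:c:]:]:]:]"

text \<open>\<open>graded F\<close> is \<open>F(T X, T Y, T Z)\<close> as a polynomial in \<open>T\<close>; its coefficient of \<open>T\<^sup>m\<close> is the
  homogeneous component of degree \<open>m\<close> of \<open>F\<close>. A product of two polynomials in \<open>T\<close> is a monomial
  only if both factors are, so factors of forms are forms.\<close>

definition graded :: "'k::field poly3 \<Rightarrow> 'k poly3 poly" where
  "graded F = eval3 (map_poly3 const4 F) (monom (monom 1 1) 1) (monom (monom (monom 1 1) 0) 1)
      (monom (monom (monom (monom 1 1) 0) 0) 1)"

lemma graded_mult:
  fixes F G :: "'k::field poly3"
  shows "graded (F * G) = graded F * graded G"
proof -
  have hom: "rng_hom (const4 :: 'k \<Rightarrow> 'k poly3 poly)"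
    unfolding const4_def
    by (intro rng_hom_comp[OF rng_hom_const_poly, where g = "\<lambda>c. [:[:[:c:]:]:]"]
        rng_hom_comp[OF rng_hom_const_poly, where g = "\<lambda>c. [:[:c:]:]"]
        rng_hom_comp[OF rng_hom_const_poly, where g = "\<lambda>c. [:c:]"] rng_hom_const_poly)
  show ?thesis unfolding graded_def rng_homD(3)[OF rng_hom_map_poly3[OF hom]] eval3_mult ..
qed

lemma sum_lessThan3_delta:
  fixes B i j l :: nat
  shows "(\<Sum>i'<B. \<Sum>j'<B. \<Sum>l'<B. if i' = i \<and> j' = j \<and> l' = l then V else 0) =
    (if i < B \<and> j < B \<and> l < B then V else (0::'a::comm_monoid_add))"
proof -
  have "(\<Sum>i'<B. \<Sum>j'<B. \<Sum>l'<B. if i' = i \<and> j' = j \<and> l' = l then V else 0) =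
      (\<Sum>x\<in>{..<B} \<times> {..<B} \<times> {..<B}. if x = (i, j, l) then V else 0)"
    unfolding sum.cartesian_product by (rule sum.cong) (auto split: if_splits)
  also have "\<dots> = (if (i, j, l) \<in> {..<B} \<times> {..<B} \<times> {..<B} then V else 0)"
    by (rule sum.delta) simp
  finally show ?thesis by simp
qed

lemma coeff3_coeff_graded:
  fixes F :: "'k::field poly3"
  shows "coeff3 (coeff (graded F) m) i j l = (if i + j + l = m then coeff3 F i j l else 0)"
proof -
  obtain B where B: "coeff3_bound F B" using coeff3_bound_ex by blast
  have const4_0: "const4 0 = 0" by (simp add: const4_def)
  define V where "V = (if i + j + l = m then coeff3 F i j l else 0)"
  have monomial_term: "const4 c * monom (monom 1 1) 1 ^ i * monom (monom (monom 1 1) 0) 1 ^ j *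
      monom (monom (monom (monom 1 1) 0) 0) 1 ^ l = monom (monom (monom (monom c l) j) i) (i + j + l)"
    for c :: 'k and i j l
    by (simp add: const4_def monom_power mult_monom flip: monom_0)
  have "coeff3 (coeff (graded F) m) i j l =
      (\<Sum>i'<B. \<Sum>j'<B. \<Sum>l'<B. if i' = i \<and> j' = j \<and> l' = l then V else 0)"
    unfolding graded_def eval3_eq_sum[OF coeff3_bound_map_poly3[of F B const4, OF B const4_0]]
      coeff3_map_poly3[of const4, OF const4_0] monomial_term
    unfolding coeff3_def coeff_sum
    by (intro sum.cong refl) (auto simp: coeff_monom V_def coeff3_def)
  also have "\<dots> = V"
    using B unfolding sum_lessThan3_delta coeff3_bound_def V_def by auto
  finally show ?thesis unfolding V_def .
qed

lemma graded_homogeneous: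
  fixes F :: "'k::field poly3"
  assumes "homogeneous F n" shows "graded F = monom F n"
  by (intro poly_eqI poly3_eqI) (use assms in \<open>auto simp: coeff3_coeff_graded coeff_monom homogeneous_def\<close>)

lemma homogeneous_if_graded_eq_monom:
  fixes F :: "'k::field poly3"
  assumes "F \<noteq> 0" "graded F = monom c n"
  shows "homogeneous F n"
  unfolding homogeneous_def
proof (intro conjI allI impI)
  fix i j l assume "coeff3 F i j l \<noteq> 0"
  moreover have "coeff3 F i j l = coeff3 (coeff (graded F) (i + j + l)) i j l"
    by (simp add: coeff3_coeff_graded)
  ultimately show "i + j + l = n" using assms(2) by (auto simp: coeff_monom coeff3_def split: if_splits)
qed fact

lemma factor_of_monom_is_monom:
  fixes p g :: "'a::idom poly"
  assumes "p * g = monom c N" "c \<noteq> 0"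
  shows "\<exists>a. p = monom a (degree p)" "degree p \<le> N"
proof -
  have p0: "p \<noteq> 0" and g0: "g \<noteq> 0" using assms by auto
  have "order 0 p + order 0 g = N" using assms order_mult[of p g 0] by simp
  moreover have deg: "degree p + degree g = N"
    using assms degree_mult_eq[OF p0 g0] by (simp add: degree_monom_eq)
  moreover have "order 0 p \<le> degree p" "order 0 g \<le> degree g" using order_degree p0 g0 by auto
  ultimately have "degree p \<le> order 0 p" by linarith
  define d where "d = degree p"
  obtain h where h: "p = monom 1 d * h"
    using monom_1_dvd_iff[OF p0] \<open>degree p \<le> order 0 p\<close> unfolding d_def by (auto elim: dvdE)
  with p0 have "h \<noteq> 0" by auto
  then have "degree p = d + degree h" using h by (simp add: degree_mult_eq degree_monom_eq)
  then have "degree h = 0" by (simp add: d_def)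
  then obtain a where "h = [:a:]" by (elim degree_eq_zeroE)
  then have "p = monom a d" using h by (simp add: smult_monom)
  then show "\<exists>a. p = monom a (degree p)" unfolding d_def by blast
  show "degree p \<le> N" using deg by simp
qed

lemma homogeneous_factor:
  fixes F G :: "'k::field poly3"
  assumes "homogeneous (F * G) N"
  shows "homogeneous F (curve_deg F)" "curve_deg F \<le> N"
proof -
  have FG: "F * G \<noteq> 0" using assms by (simp add: homogeneous_def)
  have "graded F * graded G = monom (F * G) N"
    using graded_homogeneous[OF assms] by (simp add: graded_mult)
  from factor_of_monom_is_monom[OF this FG] obtain c where
    "graded F = monom c (degree (graded F))" "degree (graded F) \<le> N" by blast
  moreover have "F \<noteq> 0" using FG by auto
  ultimately have "homogeneous F (degree (graded F))" "degree (graded F) \<le> N"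
    using homogeneous_if_graded_eq_monom by blast+
  then show "homogeneous F (curve_deg F)" "curve_deg F \<le> N" by (simp_all add: curve_deg_eqI)
qed

section \<open>Restriction of a form to a line\<close>

definition scale_pt :: "'k::comm_ring_1 \<Rightarrow> 'k pt \<Rightarrow> 'k pt" where
  "scale_pt c u = (c * fst u, c * fst (snd u), c * snd (snd u))"

definition add_pt :: "'k::comm_ring_1 pt \<Rightarrow> 'k pt \<Rightarrow> 'k pt" where
  "add_pt u v = (fst u + fst v, fst (snd u) + fst (snd v), snd (snd u) + snd (snd v))"

abbreviation zero_pt :: "'k::zero pt" where "zero_pt \<equiv> (0, 0, 0)"

lemma restr_eq_sum:
  assumes "coeff3_bound F B"
  shows "restr F v w = (\<Sum>i<B. \<Sum>j<B. \<Sum>l<B. [:coeff3 F i j l:] * [:fst v, fst w:] ^ i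
    * [:fst (snd v), fst (snd w):] ^ j * [:snd (snd v), snd (snd w):] ^ l)"
  unfolding restr_def map_poly3_def[symmetric]
  by (simp add: eval3_eq_sum[OF coeff3_bound_map_poly3[OF assms]] coeff3_map_poly3)

lemma poly_restr: "poly (restr F v w) s = evalp F (add_pt v (scale_pt s w))"
proof -
  obtain B where "coeff3_bound F B" using coeff3_bound_ex by blast
  then show ?thesis
    by (simp add: restr_eq_sum evalp_def eval3_eq_sum poly_sum poly_power add_pt_def
        scale_pt_def mult_ac)
qed

lemma restr_mult: "restr (F * G) v w = restr F v w * restr G v w"
  unfolding restr_def map_poly3_def[symmetric] rng_homD(3)[OF rng_hom_map_poly3[OF rng_hom_const_poly]]
  by (rule eval3_mult)

lemma evalp_mult: "evalp (F * G) u = evalp F u * evalp G u"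
  unfolding evalp_def by (rule eval3_mult)

lemma evalp_scale_pt:
  assumes "homogeneous F n"
  shows "evalp F (scale_pt c u) = c ^ n * evalp F u"
proof -
  obtain B where B: "coeff3_bound F B" using coeff3_bound_ex by blast
  have scaled_term: "coeff3 F i j l * (c * fst u) ^ i * (c * fst (snd u)) ^ j * (c * snd (snd u)) ^ l =
      c ^ n * (coeff3 F i j l * fst u ^ i * fst (snd u) ^ j * snd (snd u) ^ l)" for i j l
  proof (cases "coeff3 F i j l = 0")
    case False
    then have "n = i + j + l" using assms by (simp add: homogeneous_def)
    then show ?thesis by (simp add: power_mult_distrib power_add mult_ac)
  qed simp
  show ?thesis
    unfolding evalp_def eval3_eq_sum[OF B] scale_pt_def sum_distrib_left by (simp add: scaled_term)
qed

lemma degree_restr_le: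
  assumes "homogeneous F n"
  shows "degree (restr F v w) \<le> n"
proof -
  obtain B where B: "coeff3_bound F B" using coeff3_bound_ex by blast
  have linear_power: "degree ([:a, b:] ^ m) \<le> m" for a b :: 'a and m
    using degree_power_le[of "[:a, b:]" m] by (auto split: if_splits)
  have monomial_degree: "degree ([:a1, b1:] ^ i * [:a2, b2:] ^ j * [:a3, b3:] ^ l) \<le> i + j + l"
    for a1 b1 a2 b2 a3 b3 :: 'a and i j l
    by (intro degree_mult_le[THEN order.trans] add_mono linear_power)
  have "degree ([:coeff3 F i j l:] * [:a1, b1:] ^ i * [:a2, b2:] ^ j * [:a3, b3:] ^ l) \<le> n"
    for a1 b1 a2 b2 a3 b3 :: 'a and i j l
    using monomial_degree[of a1 b1 i a2 b2 j a3 b3 l] assms by (cases "coeff3 F i j l = 0") (auto simp: homogeneous_def)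
  then show ?thesis
    unfolding restr_eq_sum[OF B] by (intro degree_sum_le) auto
qed

lemma coeff_mult_1:
  "coeff (p * q) 1 = coeff p 0 * coeff q 1 + coeff p 1 * coeff (q::'a::comm_semiring_1 poly) 0"
  by (simp add: coeff_mult atMost_Suc add.commute)

lemma coeff_1_linear_power: "coeff ([:a, b:] ^ i) 1 = of_nat i * a ^ (i - 1) * (b::'a::comm_semiring_1)"
proof (induction i)
  case (Suc i)
  have "coeff ([:a, b:] ^ Suc i) 1 = a * coeff ([:a, b:] ^ i) 1 + b * a ^ i"
    by (simp add: coeff_mult_1 coeff_0_power del: power_Suc) (simp add: mult_ac coeff_0_power)
  also have "\<dots> = of_nat (Suc i) * a ^ i * b"
    using Suc by (cases i) (simp_all add: algebra_simps)
  finally show ?case by simp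
qed simp

lemma sum_lessThan_shift_vanishing:
  "h 0 = 0 \<Longrightarrow> h B = 0 \<Longrightarrow> (\<Sum>i<B. h (Suc i)) = (\<Sum>i<B. h i)"
  by (metis add.commute add.right_neutral sum.lessThan_Suc sum.lessThan_Suc_shift add_0)

lemma coeff3_dX: "coeff3 (dX F) i j l = of_nat (Suc i) * coeff3 F (Suc i) j l"
  by (simp add: dX_def coeff3_def coeff_pderiv of_nat_poly del: of_nat_Suc)

lemma coeff3_dY: "coeff3 (dY F) i j l = of_nat (Suc j) * coeff3 F i (Suc j) l"
  by (simp add: dY_def coeff3_def coeff_pderiv of_nat_poly coeff_map_poly del: of_nat_Suc)

lemma coeff3_dZ: "coeff3 (dZ F) i j l = of_nat (Suc l) * coeff3 F i j (Suc l)"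
  by (simp add: dZ_def coeff3_def coeff_pderiv coeff_map_poly)

lemma coeff3_bound_derivs:
  assumes "coeff3_bound F B"
  shows "coeff3_bound (dX F) B" "coeff3_bound (dY F) B" "coeff3_bound (dZ F) B"
  using assms unfolding coeff3_bound_def coeff3_dX coeff3_dY coeff3_dZ
  by (metis Suc_lessD mult_zero_right)+

lemma evalp_derivs_eq_sum:
  assumes "coeff3_bound F B"
  shows "evalp (dX F) (x, y, z) = (\<Sum>i<B. \<Sum>j<B. \<Sum>l<B. of_nat i * coeff3 F i j l * x ^ (i - 1) * y ^ j * z ^ l)"
    and "evalp (dY F) (x, y, z) = (\<Sum>i<B. \<Sum>j<B. \<Sum>l<B. of_nat j * coeff3 F i j l * x ^ i * y ^ (j - 1) * z ^ l)"
    and "evalp (dZ F) (x, y, z) = (\<Sum>i<B. \<Sum>j<B. \<Sum>l<B. of_nat l * coeff3 F i j l * x ^ i * y ^ j * z ^ (l - 1))"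
proof -
  have vanish: "coeff3 F B j l = 0" "coeff3 F i B l = 0" "coeff3 F i j B = 0" for i j l
    using assms unfolding coeff3_bound_def by blast+
  have "evalp (dX F) (x, y, z) = (\<Sum>i<B. (\<lambda>i. \<Sum>j<B. \<Sum>l<B.
      of_nat i * coeff3 F i j l * x ^ (i - 1) * y ^ j * z ^ l) (Suc i))"
    unfolding evalp_def eval3_eq_sum[OF coeff3_bound_derivs(1)[OF assms]] coeff3_dX
    by (simp add: mult.assoc del: of_nat_Suc)
  then show "evalp (dX F) (x, y, z) =
      (\<Sum>i<B. \<Sum>j<B. \<Sum>l<B. of_nat i * coeff3 F i j l * x ^ (i - 1) * y ^ j * z ^ l)"
    by (subst (asm) sum_lessThan_shift_vanishing) (simp_all add: vanish)
  have "evalp (dY F) (x, y, z) = (\<Sum>i<B. \<Sum>j<B. (\<lambda>j. \<Sum>l<B.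
      of_nat j * coeff3 F i j l * x ^ i * y ^ (j - 1) * z ^ l) (Suc j))"
    unfolding evalp_def eval3_eq_sum[OF coeff3_bound_derivs(2)[OF assms]] coeff3_dY
    by (simp add: mult_ac del: of_nat_Suc)
  also have "\<dots> = (\<Sum>i<B. \<Sum>j<B. \<Sum>l<B. of_nat j * coeff3 F i j l * x ^ i * y ^ (j - 1) * z ^ l)"
    by (intro sum.cong refl sum_lessThan_shift_vanishing) (simp_all add: vanish)
  finally show "evalp (dY F) (x, y, z) =
      (\<Sum>i<B. \<Sum>j<B. \<Sum>l<B. of_nat j * coeff3 F i j l * x ^ i * y ^ (j - 1) * z ^ l)" .
  have "evalp (dZ F) (x, y, z) = (\<Sum>i<B. \<Sum>j<B. \<Sum>l<B. (\<lambda>l.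
      of_nat l * coeff3 F i j l * x ^ i * y ^ j * z ^ (l - 1)) (Suc l))"
    unfolding evalp_def eval3_eq_sum[OF coeff3_bound_derivs(3)[OF assms]] coeff3_dZ
    by (simp add: mult_ac del: of_nat_Suc)
  also have "\<dots> = (\<Sum>i<B. \<Sum>j<B. \<Sum>l<B. of_nat l * coeff3 F i j l * x ^ i * y ^ j * z ^ (l - 1))"
    by (intro sum.cong refl sum_lessThan_shift_vanishing) (simp_all add: vanish)
  finally show "evalp (dZ F) (x, y, z) =
      (\<Sum>i<B. \<Sum>j<B. \<Sum>l<B. of_nat l * coeff3 F i j l * x ^ i * y ^ j * z ^ (l - 1))" .
qed

lemma coeff_1_restr: "coeff (restr F v w) 1 = dot (gradient F v) w"
proof -
  obtain B where B: "coeff3_bound F B" using coeff3_bound_ex by blast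
  obtain v1 v2 v3 where v: "v = (v1, v2, v3)" by (cases v) auto
  obtain w1 w2 w3 where w: "w = (w1, w2, w3)" by (cases w) auto
  have linear_term: "coeff ([:c:] * [:v1, w1:] ^ i * [:v2, w2:] ^ j * [:v3, w3:] ^ l) 1 =
      c * (of_nat i * v1 ^ (i - 1) * w1 * v2 ^ j * v3 ^ l)
    + c * (of_nat j * v1 ^ i * v2 ^ (j - 1) * w2 * v3 ^ l)
    + c * (of_nat l * v1 ^ i * v2 ^ j * v3 ^ (l - 1) * w3)" for c i j l
    by (simp only: mult.assoc coeff_mult_1 coeff_mult_0 coeff_0_power coeff_1_linear_power)
      (simp add: algebra_simps)
  show ?thesis
    unfolding restr_eq_sum[OF B] coeff_sum v w fst_conv snd_conv linear_term
      gradient_def dot_def evalp_derivs_eq_sum[OF B]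
    by (simp add: sum.distrib sum_distrib_right sum_distrib_left mult_ac)
qed

section \<open>Polynomials over an infinite field\<close>

lemma alg_closed_infinite_UNIV:
  assumes "alg_closed TYPE('k::field)"
  shows "infinite (UNIV::'k set)"
proof
  assume fin: "finite (UNIV::'k set)"
  define P where "P = (\<Prod>a\<in>(UNIV::'k set). [:-a, 1:])"
  have "poly P x = 0" for x
    unfolding P_def poly_prod using fin by (simp add: prod_zero_iff)
  moreover have "degree (P + 1) > 0"
  proof (rule ccontr)
    assume "\<not> degree (P + 1) > 0"
    then obtain c where "P + 1 = [:c:]" by (metis degree_eq_zeroE neq0_conv)
    then have "P = [:c - 1:]" by (metis add_diff_cancel_right' diff_pCons diff_0_right one_pCons pCons_0_0)
    then show False using \<open>poly P 0 = 0\<close> fin by (simp add: P_def prod_zero_iff)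
  qed
  then obtain x where "poly (P + 1) x = 0" using assms unfolding alg_closed_def by blast
  ultimately show False by simp
qed

lemma poly_eqI_infinite:
  fixes p q :: "'k::field poly"
  assumes "infinite S" "\<And>s. s \<in> S \<Longrightarrow> poly p s = poly q s"
  shows "p = q"
proof (rule ccontr)
  assume "p \<noteq> q"
  then have "finite {x. poly (p - q) x = 0}" by (intro poly_roots_finite) simp
  moreover have "S \<subseteq> {x. poly (p - q) x = 0}" using assms(2) by auto
  ultimately show False using assms(1) finite_subset by blast
qed

lemma infinite_non_roots:
  fixes p :: "'k::field poly"
  assumes "infinite (UNIV::'k set)" "p \<noteq> 0"
  shows "infinite {s. poly p s \<noteq> 0}"
proof -
  have "{s. poly p s \<noteq> 0} = UNIV - {s. poly p s = 0}" by auto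
  then show ?thesis using assms poly_roots_finite by (metis Diff_infinite_finite)
qed

lemma alg_closed_sum_order_roots:
  assumes "alg_closed TYPE('k::field)" "(p::'k poly) \<noteq> 0"
  shows "(\<Sum>r\<in>{r. poly p r = 0}. order r p) = degree p"
  using assms(2)
proof (induction "degree p" arbitrary: p)
  case 0
  then have "{r. poly p r = 0} = {}" by (auto elim: degree_eq_zeroE)
  then show ?case using 0 by simp
next
  case (Suc d)
  then obtain r0 where r0: "poly p r0 = 0" using assms(1) unfolding alg_closed_def by (metis zero_less_Suc)
  then obtain g where pg: "p = [:-r0, 1:] * g" by (metis dvdE poly_eq_0_iff_dvd)
  have g0: "g \<noteq> 0" using Suc.prems pg by auto
  have "degree p = 1 + degree g" unfolding pg by (subst degree_mult_eq) (use g0 in auto)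
  then have IH: "(\<Sum>r\<in>{r. poly g r = 0}. order r g) = d" using Suc.hyps g0 by simp
  have fin: "finite {r. poly p r = 0}" using Suc.prems poly_roots_finite by blast
  have ord: "order r p = (if r = r0 then 1 else 0) + order r g" for r
  proof -
    have "order r p = order r [:-r0, 1:] + order r g" unfolding pg
      by (rule order_mult) (use Suc.prems pg in simp)
    moreover have "order r [:-r0, 1:] = (if r = r0 then 1 else 0)"
      using order_power_n_n[of r0 1] order_0I[of "[:-r0, 1:]" r] by auto
    ultimately show ?thesis by simp
  qed
  have "(\<Sum>r\<in>{r. poly g r = 0}. order r g) = (\<Sum>r\<in>{r. poly p r = 0}. order r g)"
    by (rule sum.mono_neutral_left[OF fin]) (use pg g0 in \<open>auto simp: order_root\<close>)
  then show ?case
    unfolding ord sum.distrib using fin r0 IH Suc.hyps(2) by (simp add: sum.delta)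
qed

lemma gradient_dot_self_on_curve:
  fixes F :: "'k::field poly3"
  assumes "infinite (UNIV::'k set)" "homogeneous F n" "evalp F v = 0"
  shows "dot (gradient F v) v = 0"
proof -
  have "restr F v v = 0"
  proof (rule poly_eqI_infinite[OF assms(1)])
    fix s :: 'k
    have "add_pt v (scale_pt s v) = scale_pt (1 + s) v" by (simp add: add_pt_def scale_pt_def algebra_simps)
    then show "poly (restr F v v) s = poly 0 s" by (simp add: poly_restr evalp_scale_pt[OF assms(2)] assms(3))
  qed
  then show ?thesis using coeff_1_restr[of F v v] by simp
qed

definition lincomb_pt :: "'k::comm_ring_1 \<Rightarrow> 'k pt \<Rightarrow> 'k \<Rightarrow> 'k pt \<Rightarrow> 'k pt" where
  "lincomb_pt x a y b = add_pt (scale_pt x a) (scale_pt y b)"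

lemma poly_restr_lincomb:
  fixes F :: "'k::field poly3"
  assumes "homogeneous F n" "x1 + s * x2 \<noteq> 0"
  shows "poly (restr F (lincomb_pt x1 a y1 b) (lincomb_pt x2 a y2 b)) s =
     (x1 + s * x2) ^ n * poly (restr F a b) ((y1 + s * y2) / (x1 + s * x2))"
proof -
  have "add_pt (lincomb_pt x1 a y1 b) (scale_pt s (lincomb_pt x2 a y2 b)) =
      scale_pt (x1 + s * x2) (add_pt a (scale_pt ((y1 + s * y2) / (x1 + s * x2)) b))"
    using assms(2) by (simp add: lincomb_pt_def add_pt_def scale_pt_def field_simps)
  then show ?thesis by (simp add: poly_restr evalp_scale_pt[OF assms(1)])
qed

lemma restr_lincomb_eq_0:
  fixes F :: "'k::field poly3"
  assumes "infinite (UNIV::'k set)" "homogeneous F n" "restr F a b = 0" "x1 \<noteq> 0 \<or> x2 \<noteq> 0"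
  shows "restr F (lincomb_pt x1 a y1 b) (lincomb_pt x2 a y2 b) = 0"
proof (rule poly_eqI_infinite[OF infinite_non_roots[OF assms(1)]])
  show "[:x1, x2:] \<noteq> 0" using assms(4) by auto
  fix s assume "s \<in> {s. poly [:x1, x2:] s \<noteq> 0}"
  then have "x1 + s * x2 \<noteq> 0" by (simp add: mult.commute)
  then show "poly (restr F (lincomb_pt x1 a y1 b) (lincomb_pt x2 a y2 b)) s = poly 0 s"
    by (simp add: poly_restr_lincomb[OF assms(2)] assms(3))
qed

definition homogenize :: "nat \<Rightarrow> 'k::comm_ring_1 poly \<Rightarrow> 'k poly \<Rightarrow> 'k poly \<Rightarrow> 'k poly" where
  "homogenize N g X Y = (\<Sum>i\<le>N. [:coeff g i:] * X ^ (N - i) * Y ^ i)"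

lemma poly_homogenize:
  "poly (homogenize N g X Y) s = (\<Sum>i\<le>N. coeff g i * poly X s ^ (N - i) * poly Y s ^ i)"
  by (simp add: homogenize_def poly_sum mult.assoc)

lemma poly_homogenize_eq:
  fixes g :: "'k::field poly"
  assumes "degree g \<le> N" "poly X s \<noteq> 0"
  shows "poly (homogenize N g X Y) s = poly X s ^ N * poly g (poly Y s / poly X s)"
proof -
  have "(\<Sum>i\<le>N. coeff g i * z ^ i) = poly g z" for z
  proof -
    have "(\<Sum>i\<le>N. coeff g i * z ^ i) = (\<Sum>i\<le>degree g. coeff g i * z ^ i)"
      by (rule sum.mono_neutral_right) (use assms(1) in \<open>auto simp: coeff_eq_0\<close>)
    then show ?thesis by (simp add: poly_altdef)
  qed
  moreover have "poly X s ^ N * (coeff g i * (poly Y s / poly X s) ^ i) =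
      coeff g i * poly X s ^ (N - i) * poly Y s ^ i" if "i \<le> N" for i
  proof -
    have "poly X s ^ N = poly X s ^ (N - i) * poly X s ^ i" using that by (simp flip: power_add)
    then show ?thesis using assms(2) by (simp add: field_simps)
  qed
  ultimately show ?thesis
    unfolding poly_homogenize by (metis (no_types, lifting) atMost_iff sum.cong sum_distrib_left)
qed

lemma order_0_monom_power:
  assumes "c \<noteq> 0" shows "order 0 ([:0, c:] ^ m) = m"
proof -
  have "[:0, c:] ^ m = monom (c ^ m) m" by (simp add: monom_power flip: monom_Suc monom_0)
  then show ?thesis using assms by simp
qed

text \<open>Reparametrising the line \<open>t \<mapsto> a + t b\<close> as \<open>s \<mapsto> (x1 a + y1 b) + s (x2 a + y2 b)\<close> is the
  Moebius substitution \<open>t = (y1 + s y2) / (x1 + s x2)\<close>, after which \<open>F\<close> picks up the factor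
  \<open>(x1 + s x2)\<^sup>n\<close>. The point \<open>s = 0\<close> corresponds to \<open>t = y1 / x1\<close>, or to \<open>t = \<infinity>\<close> if \<open>x1 = 0\<close>,
  where the order is the drop of degree \<open>n - degree (restr F a b)\<close>.\<close>

lemma order_restr_lincomb_finite:
  fixes F :: "'k::field poly3"
  assumes inf: "infinite (UNIV::'k set)" and hom: "homogeneous F n" and f0: "restr F a b \<noteq> 0"
    and det: "x1 * y2 - x2 * y1 \<noteq> 0" and x1: "x1 \<noteq> 0"
  defines "\<rho> \<equiv> restr F (lincomb_pt x1 a y1 b) (lincomb_pt x2 a y2 b)"
  shows "\<rho> \<noteq> 0 \<and> order 0 \<rho> = order (y1 / x1) (restr F a b)"
proof -
  define f where "f = restr F a b"
  define r where "r = y1 / x1"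
  define m where "m = order r f"
  define c where "c = y2 - r * x2"
  define X where "X = [:x1, x2:]"
  define Y where "Y = [:y1, y2:]"
  have pX: "poly X s = x1 + s * x2" and pY: "poly Y s = y1 + s * y2" for s
    by (simp_all add: X_def Y_def mult.commute)
  obtain g where fg: "f = [:-r, 1:] ^ m * g" and nd: "\<not> [:-r, 1:] dvd g"
    using order_decomp f0 unfolding f_def m_def by blast
  have g0: "g \<noteq> 0" using f0 fg f_def by auto
  have gr: "poly g r \<noteq> 0" using nd by (simp add: poly_eq_0_iff_dvd)
  have "m + degree g = degree f"
    unfolding fg by (subst degree_mult_eq) (use g0 in \<open>auto simp: degree_linear_power\<close>)
  then have mn: "m \<le> n" and dg: "degree g \<le> n - m"
    using degree_restr_le[OF hom, of a b] unfolding f_def by auto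
  have c0: "c \<noteq> 0" using det x1 by (auto simp: c_def r_def field_simps)
  define H where "H = homogenize (n - m) g X Y"
  have rho_eq: "\<rho> = [:0, c:] ^ m * H"
  proof (rule poly_eqI_infinite[OF infinite_non_roots[OF inf]])
    show "X \<noteq> 0" using x1 by (simp add: X_def)
    fix s assume "s \<in> {s. poly X s \<noteq> 0}"
    then have Xs: "poly X s \<noteq> 0" by simp
    have "poly X s * (poly Y s / poly X s - r) = poly Y s - r * poly X s"
      using Xs by (simp add: field_simps)
    also have "\<dots> = s * c"
      using x1 by (simp add: pX pY c_def r_def algebra_simps)
    finally have key: "poly X s * (poly Y s / poly X s - r) = s * c" .
    have "poly \<rho> s = poly X s ^ (n - m) * poly X s ^ m *
        ((poly Y s / poly X s - r) ^ m * poly g (poly Y s / poly X s))"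
      using Xs mn unfolding \<rho>_def
      by (simp add: poly_restr_lincomb[OF hom] pX pY fg[unfolded f_def] flip: power_add)
    also have "\<dots> = (s * c) ^ m * poly H s"
      unfolding key[symmetric] H_def poly_homogenize_eq[OF dg Xs] by (simp add: power_mult_distrib mult_ac)
    finally show "poly \<rho> s = poly ([:0, c:] ^ m * H) s" by (simp add: poly_power mult.commute)
  qed
  have "poly H 0 = x1 ^ (n - m) * poly g r"
    unfolding H_def using x1 by (subst poly_homogenize_eq[OF dg]) (simp_all add: pX pY r_def)
  then have H0: "poly H 0 \<noteq> 0" using x1 gr by simp
  then have "order 0 \<rho> = m"
    unfolding rho_eq using c0 by (subst order_mult) (auto simp: order_0_monom_power order_0I)
  then show ?thesis using rho_eq c0 H0 by (auto simp: m_def r_def f_def)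
qed

lemma order_restr_lincomb_infinite:
  fixes F :: "'k::field poly3"
  assumes inf: "infinite (UNIV::'k set)" and hom: "homogeneous F n" and f0: "restr F a b \<noteq> 0"
    and det: "x1 * y2 - x2 * y1 \<noteq> 0" and x1: "x1 = 0"
  defines "\<rho> \<equiv> restr F (lincomb_pt x1 a y1 b) (lincomb_pt x2 a y2 b)"
  shows "\<rho> \<noteq> 0 \<and> order 0 \<rho> = n - degree (restr F a b)"
proof -
  define f where "f = restr F a b"
  define D where "D = degree f"
  define X where "X = [:x1, x2:]"
  define Y where "Y = [:y1, y2:]"
  have pX: "poly X s = x1 + s * x2" and pY: "poly Y s = y1 + s * y2" for s
    by (simp_all add: X_def Y_def mult.commute)
  have x2: "x2 \<noteq> 0" and y1: "y1 \<noteq> 0" using det x1 by auto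
  have Dn: "D \<le> n" using degree_restr_le[OF hom] by (simp add: D_def f_def)
  define H where "H = homogenize D f X Y"
  have rho_eq: "\<rho> = [:0, x2:] ^ (n - D) * H"
  proof (rule poly_eqI_infinite[OF infinite_non_roots[OF inf]])
    show "X \<noteq> 0" using x2 by (simp add: X_def)
    fix s assume "s \<in> {s. poly X s \<noteq> 0}"
    then have Xs: "poly X s \<noteq> 0" by simp
    have "poly \<rho> s = poly X s ^ (n - D) * (poly X s ^ D * poly f (poly Y s / poly X s))"
      using Xs Dn unfolding \<rho>_def
      by (simp add: poly_restr_lincomb[OF hom] pX pY f_def flip: power_add)
    also have "\<dots> = poly X s ^ (n - D) * poly H s"
      unfolding H_def by (subst poly_homogenize_eq) (use Xs in \<open>simp_all add: D_def\<close>)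
    finally show "poly \<rho> s = poly ([:0, x2:] ^ (n - D) * H) s"
      by (simp add: pX x1 mult.commute)
  qed
  have "poly H 0 = (\<Sum>i\<le>D. coeff f i * 0 ^ (D - i) * y1 ^ i)"
    unfolding H_def poly_homogenize pX pY x1 by simp
  also have "\<dots> = coeff f D * y1 ^ D"
    by (subst sum.mono_neutral_right[of "{..D}" "{D}"]) auto
  finally have H0: "poly H 0 \<noteq> 0" using f0 y1 by (simp add: D_def f_def)
  then have "order 0 \<rho> = n - D"
    unfolding rho_eq using x2 by (subst order_mult) (auto simp: order_0_monom_power order_0I)
  then show ?thesis using rho_eq x2 H0 by (auto simp: D_def f_def)
qed

section \<open>Points, lines and coordinates\<close>

lemma mem_pclass: "u \<in> pclass v \<longleftrightarrow> (\<exists>c. c \<noteq> 0 \<and> u = scale_pt c v)"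
  by (auto simp: pclass_def scale_pt_def)

lemma scale_pt_scale_pt: "scale_pt a (scale_pt b v) = scale_pt (a * b) v"
  by (simp add: scale_pt_def mult.assoc)

lemma scale_pt_eq_zero_iff: "scale_pt c (v::'k::field pt) = zero_pt \<longleftrightarrow> c = 0 \<or> v = zero_pt"
  by (cases v) (auto simp: scale_pt_def)

lemma pclass_self: "v \<in> pclass (v::'k::field pt)"
  unfolding mem_pclass by (rule exI[of _ 1]) (simp add: scale_pt_def)

lemma rep_pclass: "\<exists>c. c \<noteq> 0 \<and> rep (pclass (v::'k::field pt)) = scale_pt c v"
proof -
  have "rep (pclass v) \<in> pclass v" unfolding rep_def by (rule someI[of _ v]) (rule pclass_self)
  then show ?thesis by (simp add: mem_pclass)
qed

lemma pclass_scale_pt: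
  assumes "c \<noteq> 0" shows "pclass (scale_pt c (v::'k::field pt)) = pclass v"
proof (intro set_eqI iffI)
  fix u
  show "u \<in> pclass (scale_pt c v) \<Longrightarrow> u \<in> pclass v"
    using assms unfolding mem_pclass scale_pt_scale_pt by (metis mult_eq_0_iff)
  assume "u \<in> pclass v"
  then obtain d where "d \<noteq> 0" "u = scale_pt (d / c * c) v" using assms by (auto simp: mem_pclass)
  then show "u \<in> pclass (scale_pt c v)"
    using assms unfolding mem_pclass scale_pt_scale_pt by (intro exI[of _ "d / c"]) simp
qed

lemma pclass_in_P2: "v \<noteq> zero_pt \<Longrightarrow> pclass v \<in> P2"
  unfolding P2_def by blast

lemma P2_member:
  assumes "P \<in> (P2 :: 'k::field pt set set)" "u \<in> P"
  shows "u \<noteq> zero_pt" "P = pclass u"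
proof -
  obtain v where v: "v \<noteq> zero_pt" "P = pclass v" using assms by (auto simp: P2_def)
  then obtain c where c: "c \<noteq> 0" "u = scale_pt c v" using assms by (auto simp: mem_pclass)
  show "u \<noteq> zero_pt" using c v by (simp add: scale_pt_eq_zero_iff)
  show "P = pclass u" using c v by (simp add: pclass_scale_pt)
qed

lemma P2_rep:
  assumes "P \<in> (P2 :: 'k::field pt set set)"
  shows "rep P \<in> P" "rep P \<noteq> zero_pt" "P = pclass (rep P)"
proof -
  obtain v where "P = pclass v" using assms by (auto simp: P2_def)
  then show "rep P \<in> P" unfolding rep_def using pclass_self by (metis someI)
  then show "rep P \<noteq> zero_pt" "P = pclass (rep P)" using P2_member[OF assms] by auto
qed

lemma pclass_eqD: "pclass v = pclass (w::'k::field pt) \<Longrightarrow> \<exists>c. c \<noteq> 0 \<and> w = scale_pt c v"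
  using pclass_self mem_pclass by metis

lemma dot_scale_left: "dot (scale_pt c u) w = c * dot u w"
  by (simp add: dot_def scale_pt_def algebra_simps)

lemma dot_scale_right: "dot u (scale_pt c w) = c * dot u w"
  by (simp add: dot_def scale_pt_def algebra_simps)

lemma dot_add_right: "dot u (add_pt v w) = dot u v + dot u w"
  by (simp add: dot_def add_pt_def algebra_simps)

lemma dot_commute: "dot u w = dot w u"
  by (simp add: dot_def mult.commute)

lemma inc_commute: "inc P L \<longleftrightarrow> inc L P"
  by (simp add: inc_def dot_commute)

definition cross :: "'k::comm_ring_1 pt \<Rightarrow> 'k pt \<Rightarrow> 'k pt" where
  "cross u v = (fst (snd u) * snd (snd v) - snd (snd u) * fst (snd v),
                snd (snd u) * fst v - fst u * snd (snd v),
                fst u * fst (snd v) - fst (snd u) * fst v)"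

lemma cross_eq_zero_imp_scale:
  fixes v w :: "'k::field pt"
  assumes "v \<noteq> zero_pt" "cross v w = zero_pt"
  shows "\<exists>c. w = scale_pt c v"
proof -
  obtain v1 v2 v3 where v: "v = (v1, v2, v3)" by (cases v) auto
  obtain w1 w2 w3 where w: "w = (w1, w2, w3)" by (cases w) auto
  have e: "v2 * w3 = v3 * w2" "v3 * w1 = v1 * w3" "v1 * w2 = v2 * w1"
    using assms(2) by (simp_all add: cross_def v w)
  consider "v1 \<noteq> 0" | "v1 = 0" "v2 \<noteq> 0" | "v1 = 0" "v2 = 0" "v3 \<noteq> 0"
    using assms(1) v by blast
  then show ?thesis
  proof cases
    case 1 then show ?thesis
      by (intro exI[of _ "w1 / v1"]) (use e in \<open>simp add: v w scale_pt_def field_simps\<close>)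
  next
    case 2 then show ?thesis
      by (intro exI[of _ "w2 / v2"]) (use e in \<open>simp add: v w scale_pt_def field_simps\<close>)
  next
    case 3 then show ?thesis
      by (intro exI[of _ "w3 / v3"]) (use e in \<open>simp add: v w scale_pt_def field_simps\<close>)
  qed
qed

lemma orthogonal_imp_scale_cross:
  fixes g v w :: "'k::field pt"
  assumes "dot g v = 0" "dot g w = 0" "cross v w \<noteq> zero_pt"
  shows "\<exists>c. g = scale_pt c (cross v w)"
proof -
  have "cross (cross v w) g = (fst w * dot g v - fst v * dot g w,
      fst (snd w) * dot g v - fst (snd v) * dot g w, snd (snd w) * dot g v - snd (snd v) * dot g w)"
    by (simp add: cross_def dot_def algebra_simps)
  then show ?thesis using cross_eq_zero_imp_scale assms by simp
qed

lemma cross_neq_zero: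
  fixes P R :: "'k::field pt set"
  assumes "P \<in> P2" "R \<in> P2" "P \<noteq> R"
  shows "cross (rep P) (rep R) \<noteq> zero_pt"
proof
  assume "cross (rep P) (rep R) = zero_pt"
  then obtain c where c: "rep R = scale_pt c (rep P)" using cross_eq_zero_imp_scale P2_rep assms(1) by blast
  then have "c \<noteq> 0" using P2_rep(2)[OF assms(2)] by (auto simp: scale_pt_def)
  then show False using assms c P2_rep(3) pclass_scale_pt by metis
qed

lemma pclass_orthogonal_eq_cross:
  fixes P R :: "'k::field pt set"
  assumes "P \<in> P2" "R \<in> P2" "P \<noteq> R" "g \<noteq> zero_pt" "dot g (rep P) = 0" "dot g (rep R) = 0"
  shows "pclass g = pclass (cross (rep P) (rep R))"
proof -
  obtain c where c: "g = scale_pt c (cross (rep P) (rep R))"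
    using orthogonal_imp_scale_cross cross_neq_zero assms by metis
  then have "c \<noteq> 0" using assms(4) by (auto simp: scale_pt_def)
  then show ?thesis using c by (simp add: pclass_scale_pt)
qed

lemma line_through_two_points_unique:
  fixes P R L1 L2 :: "'k::field pt set"
  assumes "P \<in> P2" "R \<in> P2" "P \<noteq> R" "L1 \<in> P2" "L2 \<in> P2"
    and "inc P L1" "inc R L1" "inc P L2" "inc R L2"
  shows "L1 = L2"
  using pclass_orthogonal_eq_cross[OF assms(1-3)] P2_rep[OF assms(4)] P2_rep[OF assms(5)] assms(6-9)
  by (metis dot_commute inc_def)

section \<open>The pencil of lines through a point\<close>

definition coords_in :: "'k set \<Rightarrow> 'k pt \<Rightarrow> bool" where
  "coords_in S v \<longleftrightarrow> fst v \<in> S \<and> fst (snd v) \<in> S \<and> snd (snd v) \<in> S"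

text \<open>For \<open>q = rep Q\<close> the points
  \<open>pclass (lincomb_pt x a y b)\<close> of the dual plane are exactly the lines through \<open>Q\<close>.\<close>

definition line_basis :: "'k::field pt \<Rightarrow> 'k pt \<Rightarrow> 'k pt \<Rightarrow> bool" where
  "line_basis q a b \<longleftrightarrow> (\<forall>u. dot q u = 0 \<longleftrightarrow> (\<exists>x y. u = lincomb_pt x a y b)) \<and>
     (\<forall>x y. lincomb_pt x a y b = zero_pt \<longrightarrow> x = 0 \<and> y = 0)"

lemma line_basisI:
  assumes "dot q a = 0" "dot q b = 0" "\<And>u. dot q u = 0 \<Longrightarrow> \<exists>x y. u = lincomb_pt x a y b"
    and "\<And>x y. lincomb_pt x a y b = zero_pt \<Longrightarrow> x = 0 \<and> y = 0"
  shows "line_basis q a b"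
  using assms by (auto simp: line_basis_def lincomb_pt_def dot_add_right dot_scale_right)

lemma line_basis_scale:
  assumes "line_basis q a b" "c \<noteq> 0"
  shows "line_basis (scale_pt c q) a b"
  using assms by (simp add: line_basis_def dot_scale_left)

lemma line_basis_ex:
  fixes q :: "'k::field pt"
  assumes "q \<noteq> zero_pt" "subfield S" "coords_in S q"
  obtains a b where "line_basis q a b" "coords_in S a" "coords_in S b"
proof -
  obtain x0 y0 z0 where q: "q = (x0, y0, z0)" by (cases q) auto
  have S: "x0 \<in> S" "y0 \<in> S" "z0 \<in> S" "0 \<in> S" "\<And>a. a \<in> S \<Longrightarrow> - a \<in> S"
    using assms(2,3) by (simp_all add: q coords_in_def subfield_def)
  note simps = q dot_def lincomb_pt_def add_pt_def scale_pt_def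
  consider "x0 \<noteq> 0" | "x0 = 0" "y0 \<noteq> 0" | "x0 = 0" "y0 = 0" "z0 \<noteq> 0"
    using assms(1) q by blast
  then show thesis
  proof cases
    case 1
    have "line_basis q (- y0, x0, 0) (- z0, 0, x0)"
    proof (rule line_basisI)
      fix u :: "'k pt" assume "dot q u = 0"
      then show "\<exists>x y. u = lincomb_pt x (- y0, x0, 0) y (- z0, 0, x0)"
        using 1 by (intro exI[of _ "fst (snd u) / x0"] exI[of _ "snd (snd u) / x0"])
          (cases u, simp add: simps field_simps, simp add: algebra_simps add_eq_0_iff2)
    qed (use 1 in \<open>auto simp: simps\<close>)
    then show thesis using that S by (simp add: coords_in_def)
  next
    case 2
    have "line_basis q (y0, - x0, 0) (0, - z0, y0)"
    proof (rule line_basisI)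
      fix u :: "'k pt" assume "dot q u = 0"
      then show "\<exists>x y. u = lincomb_pt x (y0, - x0, 0) y (0, - z0, y0)"
        using 2 by (intro exI[of _ "fst u / y0"] exI[of _ "snd (snd u) / y0"])
          (cases u, simp add: simps field_simps, simp add: algebra_simps add_eq_0_iff2)
    qed (use 2 in \<open>auto simp: simps\<close>)
    then show thesis using that S by (simp add: coords_in_def)
  next
    case 3
    have "line_basis q (z0, 0, - x0) (0, z0, - y0)"
    proof (rule line_basisI)
      fix u :: "'k pt" assume "dot q u = 0"
      then show "\<exists>x y. u = lincomb_pt x (z0, 0, - x0) y (0, z0, - y0)"
        using 3 by (intro exI[of _ "fst u / z0"] exI[of _ "fst (snd u) / z0"])
          (cases u, simp add: simps field_simps)
    qed (use 3 in \<open>auto simp: simps\<close>)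
    then show thesis using that S by (simp add: coords_in_def)
  qed
qed

lemma scale_pt_lincomb_pt: "scale_pt c (lincomb_pt x a y b) = lincomb_pt (c * x) a (c * y) b"
  by (simp add: lincomb_pt_def add_pt_def scale_pt_def algebra_simps)

lemma line_basis_lincomb_eq_iff:
  assumes "line_basis q a b"
  shows "lincomb_pt x a y b = lincomb_pt x' a y' b \<longleftrightarrow> x = x' \<and> y = y'"
proof -
  have "lincomb_pt x a y b = lincomb_pt x' a y' b \<longleftrightarrow> lincomb_pt (x - x') a (y - y') b = zero_pt"
    by (auto simp: lincomb_pt_def add_pt_def scale_pt_def algebra_simps)
  then show ?thesis using assms unfolding line_basis_def by force
qed

lemma line_basis_lincomb_neq_zero:
  "line_basis q a b \<Longrightarrow> x \<noteq> 0 \<or> y \<noteq> 0 \<Longrightarrow> lincomb_pt x a y b \<noteq> zero_pt"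
  unfolding line_basis_def by blast

lemma pencil_point:
  assumes "line_basis (rep Q) a b" "x \<noteq> 0 \<or> y \<noteq> 0"
  shows "pclass (lincomb_pt x a y b) \<in> P2" "inc Q (pclass (lincomb_pt x a y b))"
proof -
  show "pclass (lincomb_pt x a y b) \<in> P2"
    by (rule pclass_in_P2) (rule line_basis_lincomb_neq_zero[OF assms])
  obtain c where c: "rep (pclass (lincomb_pt x a y b)) = scale_pt c (lincomb_pt x a y b)"
    using rep_pclass by blast
  have "dot (rep Q) (lincomb_pt x a y b) = 0" using assms(1) unfolding line_basis_def by blast
  then show "inc Q (pclass (lincomb_pt x a y b))" unfolding inc_def c dot_scale_right by simp
qed

lemma pencil_coords:
  assumes "line_basis (rep Q) a b" "L \<in> P2" "inc Q L"
  obtains x y where "rep L = lincomb_pt x a y b" "x \<noteq> 0 \<or> y \<noteq> 0"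
proof -
  obtain x y where xy: "rep L = lincomb_pt x a y b"
    using assms unfolding line_basis_def inc_def by blast
  moreover have "x \<noteq> 0 \<or> y \<noteq> 0"
    using xy P2_rep(2)[OF assms(2)] by (auto simp: lincomb_pt_def add_pt_def scale_pt_def)
  ultimately show thesis by (rule that)
qed

lemma pclass_lincomb_eq_iff:
  assumes "line_basis q a b" "x1 \<noteq> 0 \<or> y1 \<noteq> 0" "x2 \<noteq> 0 \<or> y2 \<noteq> 0"
  shows "pclass (lincomb_pt x1 a y1 b) = pclass (lincomb_pt x2 a y2 b) \<longleftrightarrow> x1 * y2 - x2 * y1 = 0"
proof
  assume "pclass (lincomb_pt x1 a y1 b) = pclass (lincomb_pt x2 a y2 b)"
  then obtain c where "lincomb_pt x2 a y2 b = scale_pt c (lincomb_pt x1 a y1 b)"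
    using pclass_eqD by blast
  then have "x2 = c * x1 \<and> y2 = c * y1"
    unfolding scale_pt_lincomb_pt line_basis_lincomb_eq_iff[OF assms(1)] .
  then show "x1 * y2 - x2 * y1 = 0" by (simp add: algebra_simps)
next
  assume det: "x1 * y2 - x2 * y1 = 0"
  obtain c where c: "c \<noteq> 0" "x2 = c * x1" "y2 = c * y1"
  proof (cases "x1 = 0")
    case True
    then show thesis using det assms(2,3) by (intro that[of "y2 / y1"]) auto
  next
    case False
    then show thesis using det assms(3) by (intro that[of "x2 / x1"]) (auto simp: field_simps)
  qed
  then show "pclass (lincomb_pt x1 a y1 b) = pclass (lincomb_pt x2 a y2 b)"
    by (metis pclass_scale_pt scale_pt_lincomb_pt)
qed

text \<open>The auxiliary point chosen in the definition of \<^const>\<open>imult\<close> for the line \<open>Q\<close> through \<open>L\<close>.\<close>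

definition second_point :: "'k::field pt set \<Rightarrow> 'k pt set \<Rightarrow> 'k pt set" where
  "second_point Q L = (SOME R. R \<in> P2 \<and> R \<noteq> L \<and> inc R Q)"

definition pencil_order :: "'k::field poly3 \<Rightarrow> 'k pt set \<Rightarrow> 'k pt set \<Rightarrow> nat" where
  "pencil_order F Q L = order 0 (restr F (rep L) (rep (second_point Q L)))"

lemma imult_eq_pencil_order:
  "imult F L Q = (if restr F (rep L) (rep (second_point Q L)) = 0 then \<infinity>
    else enat (pencil_order F Q L))"
  by (simp add: imult_def second_point_def pencil_order_def Let_def)

lemma second_point_in_pencil:
  assumes "line_basis (rep Q) a b" "L \<in> P2"
  shows "second_point Q L \<in> P2" "second_point Q L \<noteq> L" "inc Q (second_point Q L)"
proof -
  let ?A = "pclass (lincomb_pt 1 a 0 b)" and ?B = "pclass (lincomb_pt 0 a 1 b)"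
  have "?A \<in> P2" "inc ?A Q" "?B \<in> P2" "inc ?B Q"
    using pencil_point[OF assms(1), of 1 0] pencil_point[OF assms(1), of 0 1] inc_commute by auto
  moreover have "?A \<noteq> ?B" using pclass_lincomb_eq_iff[OF assms(1)] by simp
  ultimately have "\<exists>R. R \<in> P2 \<and> R \<noteq> L \<and> inc R Q" by metis
  then have "second_point Q L \<in> P2 \<and> second_point Q L \<noteq> L \<and> inc (second_point Q L) Q"
    unfolding second_point_def by (rule someI_ex)
  then show "second_point Q L \<in> P2" "second_point Q L \<noteq> L" "inc Q (second_point Q L)"
    using inc_commute by auto
qed

lemma pencil_coords_second_point:
  assumes Q: "line_basis (rep Q) a b" and L: "L \<in> P2" "inc Q L"
  obtains x y x' y' where "rep L = lincomb_pt x a y b" "rep (second_point Q L) = lincomb_pt x' a y' b"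
    "x * y' - x' * y \<noteq> 0"
proof -
  note R = second_point_in_pencil[OF Q L(1)]
  obtain x y where xy: "rep L = lincomb_pt x a y b" "x \<noteq> 0 \<or> y \<noteq> 0"
    using pencil_coords[OF Q L] .
  obtain x' y' where xy': "rep (second_point Q L) = lincomb_pt x' a y' b" "x' \<noteq> 0 \<or> y' \<noteq> 0"
    using pencil_coords[OF Q R(1,3)] .
  have "L = pclass (lincomb_pt x a y b)" using P2_rep(3)[OF L(1)] xy(1) by simp
  moreover have "second_point Q L = pclass (lincomb_pt x' a y' b)" using P2_rep(3)[OF R(1)] xy'(1) by simp
  ultimately have "x * y' - x' * y \<noteq> 0" using pclass_lincomb_eq_iff[OF Q xy(2) xy'(2)] R(2) by auto
  with xy(1) xy'(1) show thesis by (rule that)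
qed

lemma pencil_order_eq:
  fixes F :: "'k::field poly3"
  assumes inf: "infinite (UNIV::'k set)" and hom: "homogeneous F n" and Q: "line_basis (rep Q) a b"
    and f0: "restr F a b \<noteq> 0" and L: "L \<in> P2" "inc Q L" and xy: "rep L = lincomb_pt x a y b"
  shows "restr F (rep L) (rep (second_point Q L)) \<noteq> 0"
    "pencil_order F Q L = (if x \<noteq> 0 then order (y / x) (restr F a b) else n - degree (restr F a b))"
proof -
  obtain x1 y1 x2 y2 where xy1: "rep L = lincomb_pt x1 a y1 b"
    and xy2: "rep (second_point Q L) = lincomb_pt x2 a y2 b" and det: "x1 * y2 - x2 * y1 \<noteq> 0"
    using pencil_coords_second_point[OF Q L] .
  have "x1 = x" "y1 = y" using xy xy1 line_basis_lincomb_eq_iff[OF Q] by auto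
  then show "restr F (rep L) (rep (second_point Q L)) \<noteq> 0"
    "pencil_order F Q L = (if x \<noteq> 0 then order (y / x) (restr F a b) else n - degree (restr F a b))"
    unfolding pencil_order_def xy1 xy2
    using order_restr_lincomb_finite[OF inf hom f0 det] order_restr_lincomb_infinite[OF inf hom f0 det]
    by (cases "x = 0"; simp)+
qed

lemma restr_basis_neq_0:
  fixes F :: "'k::field poly3"
  assumes "infinite (UNIV::'k set)" "homogeneous F n" "line_basis (rep Q) a b" "L \<in> P2" "inc Q L"
    and "restr F (rep L) (rep (second_point Q L)) \<noteq> 0"
  shows "restr F a b \<noteq> 0"
proof
  assume f0: "restr F a b = 0"
  obtain x1 y1 x2 y2 where "rep L = lincomb_pt x1 a y1 b"
    "rep (second_point Q L) = lincomb_pt x2 a y2 b" "x1 * y2 - x2 * y1 \<noteq> 0"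
    using pencil_coords_second_point[OF assms(3-5)] .
  then show False
    using restr_lincomb_eq_0[OF assms(1,2) f0, of x1 x2] assms(6) by fastforce
qed

lemma on_curve_iff_order:
  assumes "L \<in> P2" "restr F (rep L) w \<noteq> 0"
  shows "on_curve F L \<longleftrightarrow> order 0 (restr F (rep L) w) \<noteq> 0"
proof -
  have "evalp F (rep L) = poly (restr F (rep L) w) 0" by (simp add: poly_restr add_pt_def scale_pt_def)
  then show ?thesis using assms by (simp add: on_curve_def order_root)
qed

lemma pencil_cases:
  assumes Q: "line_basis (rep Q) a b" and L: "L \<in> P2" "inc Q L"
  obtains r where "L = pclass (lincomb_pt 1 a r b)" | "L = pclass (lincomb_pt 0 a 1 b)"
proof -
  obtain x y where xy: "rep L = lincomb_pt x a y b" "x \<noteq> 0 \<or> y \<noteq> 0"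
    using pencil_coords[OF Q L] .
  then have L: "L = pclass (lincomb_pt x a y b)" using P2_rep(3)[OF L(1)] by simp
  show thesis
  proof (cases "x = 0")
    case True
    then show thesis using that(2) xy(2) pclass_lincomb_eq_iff[OF Q] unfolding L by simp
  next
    case False
    then show thesis using that(1)[of "y / x"] pclass_lincomb_eq_iff[OF Q] unfolding L by simp
  qed
qed

lemma pencil_order_finite_point:
  fixes F :: "'k::field poly3"
  assumes "infinite (UNIV::'k set)" "homogeneous F n" "line_basis (rep Q) a b" "restr F a b \<noteq> 0"
  shows "pencil_order F Q (pclass (lincomb_pt 1 a r b)) = order r (restr F a b)"
proof -
  obtain c where "c \<noteq> 0" "rep (pclass (lincomb_pt 1 a r b)) = lincomb_pt c a (c * r) b"
    using rep_pclass[of "lincomb_pt 1 a r b"] unfolding scale_pt_lincomb_pt by auto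
  then show ?thesis using pencil_order_eq(2)[OF assms] pencil_point[OF assms(3)] by simp
qed

lemma pencil_order_point_at_infinity:
  fixes F :: "'k::field poly3"
  assumes "infinite (UNIV::'k set)" "homogeneous F n" "line_basis (rep Q) a b" "restr F a b \<noteq> 0"
  shows "pencil_order F Q (pclass (lincomb_pt 0 a 1 b)) = n - degree (restr F a b)"
proof -
  obtain c where "rep (pclass (lincomb_pt 0 a 1 b)) = lincomb_pt 0 a c b"
    using rep_pclass[of "lincomb_pt 0 a 1 b"] unfolding scale_pt_lincomb_pt by auto
  then show ?thesis using pencil_order_eq(2)[OF assms] pencil_point[OF assms(3)] by simp
qed

lemma on_curve_iff_pencil_order:
  fixes F :: "'k::field poly3"
  assumes "infinite (UNIV::'k set)" "homogeneous F n" "line_basis (rep Q) a b" "restr F a b \<noteq> 0"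
    and "L \<in> P2" "inc Q L"
  shows "on_curve F L \<longleftrightarrow> pencil_order F Q L \<noteq> 0"
  using pencil_coords[OF assms(3,5,6)] pencil_order_eq(1)[OF assms] on_curve_iff_order[OF assms(5)]
  unfolding pencil_order_def by metis

lemma pencil_order_sum:
  fixes F :: "'k::field poly3"
  assumes ac: "alg_closed TYPE('k)" and hom: "homogeneous F n" and Q: "line_basis (rep Q) a b"
    and f0: "restr F a b \<noteq> 0"
  defines "Z \<equiv> {L \<in> P2. inc Q L \<and> on_curve F L}"
  shows "finite Z" "(\<Sum>L\<in>Z. pencil_order F Q L) = n"
proof -
  have inf: "infinite (UNIV::'k set)" by (rule alg_closed_infinite_UNIV[OF ac])
  define f where "f = restr F a b"
  define roots where "roots = {r. poly f r = 0}"
  define pt where "pt r = pclass (lincomb_pt 1 a r b)" for r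
  define pt_inf where "pt_inf = pclass (lincomb_pt 0 a 1 b)"
  note order_pt = pencil_order_finite_point[OF inf hom Q f0, folded f_def pt_def]
  note on_curve_iff = on_curve_iff_pencil_order[OF inf hom Q f0]
  have Z_subset: "Z \<subseteq> pt ` roots \<union> {pt_inf}"
  proof
    fix L assume "L \<in> Z"
    then have L: "L \<in> P2" "inc Q L" "pencil_order F Q L \<noteq> 0" using on_curve_iff by (auto simp: Z_def)
    from pencil_cases[OF Q L(1,2)] show "L \<in> pt ` roots \<union> {pt_inf}"
      by cases (use L(3) order_pt in \<open>auto simp: pt_def pt_inf_def roots_def order_root\<close>)
  qed
  have inj: "inj_on pt roots" and pt_inf_notin: "pt_inf \<notin> pt ` roots"
    using pclass_lincomb_eq_iff[OF Q] by (auto simp: inj_on_def pt_def pt_inf_def)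
  have fin_roots: "finite roots" unfolding roots_def f_def using f0 poly_roots_finite by blast
  then show "finite Z" using Z_subset finite_subset by blast
  have "(\<Sum>L\<in>Z. pencil_order F Q L) = (\<Sum>L\<in>pt ` roots \<union> {pt_inf}. pencil_order F Q L)"
    by (rule sum.mono_neutral_left)
      (use fin_roots Z_subset pencil_point[OF Q] on_curve_iff in \<open>auto simp: Z_def pt_def pt_inf_def\<close>)
  also have "\<dots> = (\<Sum>r\<in>roots. order r f) + (n - degree f)"
    using fin_roots pt_inf_notin pencil_order_point_at_infinity[OF inf hom Q f0]
    by (simp add: sum.reindex[OF inj] order_pt pt_inf_def f_def)
  also have "(\<Sum>r\<in>roots. order r f) = degree f"
    unfolding roots_def using alg_closed_sum_order_roots[OF ac] f0 by (simp add: f_def)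
  finally show "(\<Sum>L\<in>Z. pencil_order F Q L) = n" using degree_restr_le[OF hom] by (simp add: f_def)
qed

text \<open>If \<open>F\<close> meets the pencil of lines through \<open>Q\<close> with multiplicity at least 2 at \<open>L\<close>, then
  the tangent of \<open>F\<close> at \<open>L\<close> is orthogonal to \<open>L\<close> (Euler) and to the auxiliary point of the pencil,
  so it is the line \<open>Q\<close> itself.\<close>

lemma pencil_order_neq_2_at_inflexion:
  fixes F :: "'k::field poly3"
  assumes inf: "infinite (UNIV::'k set)" and hom: "homogeneous F n" and Q: "line_basis (rep Q) a b"
    and QP2: "Q \<in> P2" and L: "L \<in> P2" "inc Q L"
    and nz: "restr F (rep L) (rep (second_point Q L)) \<noteq> 0" and infl: "inflexion F L"
  shows "pencil_order F Q L \<noteq> 2"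
proof
  assume order_2: "pencil_order F Q L = 2"
  define R where "R = second_point Q L"
  have R: "R \<in> P2" "L \<noteq> R" "inc Q R" using second_point_in_pencil[OF Q L(1)] unfolding R_def by auto
  have "monom 1 2 dvd restr F (rep L) (rep R)"
    using nz order_2 unfolding R_def pencil_order_def by (simp add: monom_1_dvd_iff)
  then have "dot (gradient F (rep L)) (rep R) = 0"
    by (simp add: monom_1_dvd_iff' flip: coeff_1_restr)
  moreover have "dot (gradient F (rep L)) (rep L) = 0"
    using infl by (intro gradient_dot_self_on_curve[OF inf hom])
      (simp add: inflexion_def nonsingular_def on_curve_def)
  moreover have "gradient F (rep L) \<noteq> zero_pt" using infl by (simp add: inflexion_def nonsingular_def)
  moreover have "dot (rep Q) (rep L) = 0" "dot (rep Q) (rep R) = 0"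
    using L(2) R(3) by (simp_all add: inc_def)
  ultimately have "tangent F L = Q"
    unfolding tangent_def using pclass_orthogonal_eq_cross[OF L(1) R(1,2)] P2_rep[OF QP2] by metis
  then have "imult F L Q > 2" using infl by (simp add: inflexion_def)
  moreover have "imult F L Q = 2" using nz order_2 by (simp add: imult_eq_pencil_order numeral_eq_enat)
  ultimately show False by simp
qed

section \<open>Unisecants through a point of the arc\<close>

lemma finite_rational_points:
  assumes "finite Fq"
  shows "finite {P. rational Fq P}"
proof (rule finite_subset)
  show "{P. rational Fq P} \<subseteq> pclass ` (Fq \<times> Fq \<times> Fq)"
    unfolding rational_def using P2_member(2) by fastforce
  show "finite (pclass ` (Fq \<times> Fq \<times> Fq))" using assms by simp
qed

lemma rational_point_line_basis:
  assumes "subfield Fq" "rational Fq Q"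
  obtains a b where "line_basis (rep Q) a b" "coords_in Fq a" "coords_in Fq b"
proof -
  obtain q where q: "q \<in> Q" "coords_in Fq q" and Q: "Q \<in> P2"
    using assms(2) unfolding rational_def coords_in_def by auto
  obtain a b where ab: "line_basis q a b" "coords_in Fq a" "coords_in Fq b"
    using line_basis_ex[OF P2_member(1)[OF Q q(1)] assms(1) q(2)] .
  obtain c where "c \<noteq> 0" "rep Q = scale_pt c q"
    using rep_pclass[of q] P2_member(2)[OF Q q(1)] by auto
  then show thesis by (intro that[of a b]) (simp_all add: line_basis_scale ab)
qed

lemma rational_lines_through:
  fixes Fq :: "'k::field set"
  assumes sf: "subfield Fq" and finF: "finite Fq"
    and Q: "line_basis (rep Q) a b" and a: "coords_in Fq a" and b: "coords_in Fq b"
  obtains S where "finite S" "card S = card Fq + 1" "\<And>L. L \<in> S \<Longrightarrow> L \<in> P2 \<and> inc Q L \<and> rational Fq L"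
proof -
  define pt where "pt s = pclass (lincomb_pt 1 a s b)" for s
  define pt_inf where "pt_inf = pclass (lincomb_pt 0 a 1 b)"
  define S where "S = pt ` Fq \<union> {pt_inf}"
  have inj: "inj_on pt Fq" and pt_inf_notin: "pt_inf \<notin> pt ` Fq"
    using pclass_lincomb_eq_iff[OF Q] by (auto simp: inj_on_def pt_def pt_inf_def)
  have "L \<in> P2 \<and> inc Q L \<and> rational Fq L" if L: "L \<in> S" for L
  proof -
    obtain x y where xy: "L = pclass (lincomb_pt x a y b)" "x \<noteq> 0 \<or> y \<noteq> 0" "x \<in> Fq" "y \<in> Fq"
    proof -
      consider s where "s \<in> Fq" "L = pt s" | "L = pt_inf" using L unfolding S_def by blast
      then show thesis
      proof cases
        case 1
        then show thesis using sf by (intro that[of 1 s]) (auto simp: pt_def subfield_def)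
      next
        case 2
        then show thesis using sf by (intro that[of 0 1]) (auto simp: pt_inf_def subfield_def)
      qed
    qed
    have "coords_in Fq (lincomb_pt x a y b)"
      using sf a b xy(3,4) by (simp add: subfield_def coords_in_def lincomb_pt_def add_pt_def scale_pt_def)
    moreover have "lincomb_pt x a y b \<in> L" using xy(1) pclass_self by simp
    moreover have "L \<in> P2" "inc Q L" using pencil_point[OF Q xy(2)] xy(1) by simp_all
    ultimately show ?thesis
      unfolding rational_def by (cases "lincomb_pt x a y b") (auto simp: coords_in_def)
  qed
  moreover have "card S = card Fq + 1"
    unfolding S_def using inj pt_inf_notin finF by (simp add: card_image)
  moreover have "finite S" using finF by (simp add: S_def)
  ultimately show thesis using that by blast
qed

lemma card_unisecants_through:
  fixes Fq :: "'k::field set"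
  assumes sf: "subfield Fq" and finF: "finite Fq" and arc: "arc Fq K" and QK: "Q \<in> K"
    and Q: "line_basis (rep Q) a b" and a: "coords_in Fq a" and b: "coords_in Fq b"
  shows "card Fq + 2 \<le> card {L. unisecant Fq K L \<and> inc Q L} + card K"
proof -
  define U where "U = {L. unisecant Fq K L \<and> inc Q L}"
  obtain S where finS: "finite S" and card_S: "card S = card Fq + 1"
    and S: "\<And>L. L \<in> S \<Longrightarrow> L \<in> P2 \<and> inc Q L \<and> rational Fq L"
    using rational_lines_through[OF sf finF Q a b] by blast
  have finK: "finite K" and KP2: "\<And>P. P \<in> K \<Longrightarrow> P \<in> P2"
    using arc by (auto simp: arc_def rational_def)
  have second: "\<exists>P. P \<in> K \<and> P \<noteq> Q \<and> inc P L" if "L \<in> S - U" for L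
  proof (rule ccontr)
    assume "\<not> ?thesis"
    then have "{P \<in> K. inc P L} = {Q}" using QK S[of L] that by auto
    then show False using S[of L] that by (simp add: U_def unisecant_def)
  qed
  define h where "h L = (SOME P. P \<in> K \<and> P \<noteq> Q \<and> inc P L)" for L
  have h: "h L \<in> K" "h L \<noteq> Q" "inc (h L) L" if "L \<in> S - U" for L
    using someI_ex[OF second[OF that]] unfolding h_def by blast+
  have "inj_on h (S - U)"
  proof (rule inj_onI)
    fix L1 L2 assume L: "L1 \<in> S - U" "L2 \<in> S - U" and eq: "h L1 = h L2"
    show "L1 = L2"
      by (rule line_through_two_points_unique[of "h L1" Q]) (use h[OF L(1)] h[OF L(2)] eq KP2 QK S L in auto)
  qed
  then have "card (S - U) \<le> card (K - {Q})" by (rule card_inj_on_le) (use h finK in auto)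
  moreover have "card (S \<inter> U) \<le> card U"
    using finite_subset[OF _ finite_rational_points[OF finF]]
    by (intro card_mono) (auto simp: U_def unisecant_def)
  moreover have "card S = card (S \<inter> U) + card (S - U)"
    using finS by (simp add: card_Int_Diff)
  moreover have "card (K - {Q}) + 1 = card K" using card_Suc_Diff1[OF finK QK] by simp
  ultimately show ?thesis using card_S unfolding U_def by linarith
qed

lemma envelope_unisecant_order:
  assumes "envelope Fq K C" "Q \<in> K" "unisecant Fq K L" "inc Q L"
  shows "restr C (rep L) (rep (second_point Q L)) \<noteq> 0" "pencil_order C Q L = 2"
  using assms imult_eq_pencil_order[of C L Q] unfolding envelope_def
  by (auto split: if_splits simp: numeral_eq_enat)

lemma envelope_degree_le_card_unisecants:
  assumes "subfield Fq" "finite Fq" "arc Fq K" "envelope Fq K C" "Q \<in> K"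
    and "line_basis (rep Q) a b" "coords_in Fq a" "coords_in Fq b"
  shows "curve_deg C \<le> 2 * card {L. unisecant Fq K L \<and> inc Q L}"
proof -
  have "int (curve_deg C) = 2 * (int (card Fq) - int (card K) + 2)"
    using assms(4) by (simp add: envelope_def)
  then show ?thesis using card_unisecants_through[OF assms(1-3,5-8)] by presburger
qed

lemma envelope_on_pencil:
  fixes C :: "'k::field_gcd poly3"
  assumes ac: "alg_closed TYPE('k)" and sf: "subfield Fq" and finF: "finite Fq" and arc: "arc Fq K"
    and env: "envelope Fq K C" and QK: "Q \<in> K"
    and Q: "line_basis (rep Q) a b" "coords_in Fq a" "coords_in Fq b"
    and U: "{L. unisecant Fq K L \<and> inc Q L} \<noteq> {}"
  shows "restr C a b \<noteq> 0" "{L \<in> P2. inc Q L \<and> on_curve C L} = {L. unisecant Fq K L \<and> inc Q L}"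
proof -
  define U where "U = {L. unisecant Fq K L \<and> inc Q L}"
  define Z where "Z = {L \<in> P2. inc Q L \<and> on_curve C L}"
  have inf: "infinite (UNIV::'k set)" by (rule alg_closed_infinite_UNIV[OF ac])
  have hom: "homogeneous C (curve_deg C)" using env by (simp add: envelope_def)
  have UP2: "L \<in> P2" if "unisecant Fq K L" for L using that by (simp add: unisecant_def rational_def)
  obtain L0 where "unisecant Fq K L0" "inc Q L0" using U by blast
  then show f0: "restr C a b \<noteq> 0"
    using restr_basis_neq_0[OF inf hom Q(1) UP2] envelope_unisecant_order[OF env QK] by blast
  have fin: "finite Z" and sum_Z: "(\<Sum>L\<in>Z. pencil_order C Q L) = curve_deg C"
    unfolding Z_def using pencil_order_sum[OF ac hom Q(1) f0] by simp_all
  have UZ: "U \<subseteq> Z" using env UP2 by (auto simp: U_def Z_def envelope_def)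
  have "(\<Sum>L\<in>U. pencil_order C Q L) = 2 * card U"
    using envelope_unisecant_order[OF env QK] by (simp add: U_def)
  moreover have "curve_deg C \<le> 2 * card U"
    unfolding U_def by (rule envelope_degree_le_card_unisecants[OF sf finF arc env QK Q])
  moreover have "(\<Sum>L\<in>Z. pencil_order C Q L) = (\<Sum>L\<in>U. pencil_order C Q L) + (\<Sum>L\<in>Z - U. pencil_order C Q L)"
    using fin UZ by (metis sum.subset_diff add.commute)
  ultimately have "(\<Sum>L\<in>Z - U. pencil_order C Q L) = 0" using sum_Z by linarith
  moreover have "pencil_order C Q L \<noteq> 0" if "L \<in> Z" for L
    using that on_curve_iff_pencil_order[OF inf hom Q(1) f0] unfolding Z_def by blast
  ultimately have "Z \<subseteq> U" using fin by auto
  with UZ show "{L \<in> P2. inc Q L \<and> on_curve C L} = {L. unisecant Fq K L \<and> inc Q L}"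
    unfolding U_def Z_def by blast
qed

lemma envelope_component_degree_le:
  fixes C C1 G :: "'k::field_gcd poly3"
  assumes ac: "alg_closed TYPE('k)" and sf: "subfield Fq" and finF: "finite Fq" and arc: "arc Fq K"
    and env: "envelope Fq K C" and C: "C = C1 * G" and QK: "Q \<in> K"
  defines "A \<equiv> {L. unisecant Fq K L \<and> inc Q L \<and> on_curve C1 L}"
  shows "curve_deg C1 \<le> (\<Sum>L\<in>A. if inflexion C1 L then 1 else 2)"
proof -
  define U where "U = {L. unisecant Fq K L \<and> inc Q L}"
  have inf: "infinite (UNIV::'k set)" by (rule alg_closed_infinite_UNIV[OF ac])
  have hom: "homogeneous C (curve_deg C)" using env by (simp add: envelope_def)
  then have hom1: "homogeneous C1 (curve_deg C1)" and deg1: "curve_deg C1 \<le> curve_deg C"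
    using homogeneous_factor C by blast+
  have QP2: "Q \<in> P2" and "rational Fq Q" using arc QK by (auto simp: arc_def rational_def)
  then obtain a b where Q: "line_basis (rep Q) a b" "coords_in Fq a" "coords_in Fq b"
    using rational_point_line_basis[OF sf] by blast
  show ?thesis
  proof (cases "U = {}")
    case True
    then show ?thesis
      using envelope_degree_le_card_unisecants[OF sf finF arc env QK Q] deg1
      unfolding U_def[symmetric] by simp
  next
    case False
    note on_pencil = envelope_on_pencil[OF ac sf finF arc env QK Q False[unfolded U_def]]
    have f1: "restr C1 a b \<noteq> 0" using on_pencil(1) by (simp add: C restr_mult)
    have A: "A = {L \<in> P2. inc Q L \<and> on_curve C1 L}"
      using on_pencil(2) by (auto simp: A_def C on_curve_def evalp_mult unisecant_def rational_def)
    have order_le_2: "restr C1 (rep L) (rep (second_point Q L)) \<noteq> 0 \<and> pencil_order C1 Q L \<le> 2"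
      if "L \<in> A" for L
    proof -
      have "restr C (rep L) (rep (second_point Q L)) \<noteq> 0 \<and> pencil_order C Q L = 2"
        using envelope_unisecant_order[OF env QK] that by (simp add: A_def)
      then show ?thesis
        unfolding pencil_order_def C restr_mult
        using order_mult[of "restr C1 (rep L) (rep (second_point Q L))" "restr G (rep L) (rep (second_point Q L))"]
        by auto
    qed
    have "curve_deg C1 = (\<Sum>L\<in>A. pencil_order C1 Q L)"
      using pencil_order_sum(2)[OF ac hom1 Q(1) f1] by (simp add: A)
    also have "\<dots> \<le> (\<Sum>L\<in>A. if inflexion C1 L then 1 else 2)"
    proof (rule sum_mono)
      fix L assume "L \<in> A"
      then show "pencil_order C1 Q L \<le> (if inflexion C1 L then 1 else 2)"
        using order_le_2 pencil_order_neq_2_at_inflexion[OF inf hom1 Q(1) QP2] by (force simp: A)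
    qed
    finally show ?thesis .
  qed
qed

lemma sum_if_mem_one_two:
  assumes "finite A" "V \<subseteq> A"
  shows "(\<Sum>x\<in>A. if x \<in> V then 1 else 2) = 2 * (card A - card V) + (card V :: nat)"
proof -
  have "(\<Sum>x\<in>A. if x \<in> V then 1 else 2) = card V + 2 * card (A - V)"
    using assms by (simp add: sum.If_cases Int_absorb1 Diff_eq)
  then show ?thesis using assms by (simp add: card_Diff_subset finite_subset)
qed

theorem lemma2p4:
  fixes Fq :: "'k::field_gcd set" and K :: "'k pt set set" and C1 :: "'k poly3"
    and Q :: "'k pt set" and q d :: nat
  assumes "alg_closed TYPE('k)"
    and "subfield Fq" and "finite Fq" and "card Fq = q" and "odd q"
    and "arc Fq K"
    and "irreducible_envelope Fq K C1"
    and "d = curve_deg C1"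
    and "Q \<in> K"
  shows "let A = {L. unisecant Fq K L \<and> inc Q L \<and> on_curve C1 L};
             u = card A;
             v = card {L \<in> A. nonsingular C1 L \<and> inflexion C1 L}
         in 2 * (u - v) + v \<ge> d"
proof -
  define A where "A = {L. unisecant Fq K L \<and> inc Q L \<and> on_curve C1 L}"
  define V where "V = {L \<in> A. nonsingular C1 L \<and> inflexion C1 L}"
  obtain C G where env: "envelope Fq K C" and C: "C = C1 * G"
    using assms(7) unfolding irreducible_envelope_def by (auto simp: dvd_def)
  have "finite A"
    using finite_rational_points[OF assms(3)] by (rule finite_subset[rotated]) (auto simp: A_def unisecant_def)
  have "d \<le> (\<Sum>L\<in>A. if inflexion C1 L then 1 else 2)"
    using envelope_component_degree_le[OF assms(1-3,6) env C assms(9)] assms(8) by (simp add: A_def)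
  also have "\<dots> = (\<Sum>L\<in>A. if L \<in> V then 1 else 2)"
    by (intro sum.cong refl) (auto simp: V_def inflexion_def)
  also have "\<dots> = 2 * (card A - card V) + card V"
    using \<open>finite A\<close> by (intro sum_if_mem_one_two) (auto simp: V_def)
  finally show ?thesis unfolding Let_def A_def V_def .
qed

end
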